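(* For $\mathbf b=\mathbf b_1+i\mathbf b_2\in\mathbb B^{n+1}_{\mathbb C}$ (with $\mathbf b_1,\mathbf b_2\in\mathbb R^{n+1}$), let $\Phi_{\mathbf b}:\mathbb B^{2n+2}\to\mathbb B^{2n+2}$ be $$\Phi_{\mathbf b}(\mathbf z)=\sqrt{1-|\mathbf b|^2}\,\frac{\mathbf z}{1+\bar{\mathbf b}\cdot\mathbf z}+\frac{1}{1+\sqrt{1-|\mathbf b|^2}}\Big(1+\frac{\sqrt{1-|\mathbf b|^2}}{1+\bar{\mathbf b}\cdot\mathbf z}\Big)\mathbf b,$$ where $\bar{\mathbf b}\cdot\mathbf z=\sum_j\bar b_jz_j$. Then: (1) $\Phi_{\mathbf b}$ extends to a $J_{\mathbb R}$-holomorphic diffeomorphism $\bar\Phi_{\mathbf b}:\bar{\mathbb B}^{2n+2}\to\bar{\mathbb B}^{2n+2}$. (2) At points of $\partial\mathbb B^{2n+2}$, $\bar\Phi_{\mathbf b}^*dr=W_{\mathbf b}\,dr$ and $\bar\Phi_{\mathbf b}^*\theta=W_{\mathbf b}\,\theta$, where, writing $\mathbf z=\mathbf x+i\mathbf y$, $$W_{\mathbf b}(\mathbf x,\mathbf y)=\frac{1-|\mathbf b_1|^2-|\mathbf b_2|^2}{(1+\mathbf b_1\cdot\mathbf x+\mathbf b_2\cdot\mathbf y)^2+(\mathbf b_2\cdot\mathbf x-\mathbf b_1\cdot\mathbf y)^2}.$$ (3) At points of $\partial\mathbb B^{2n+2}$, $$\bar\Phi_{\mathbf b}^*d\theta=W_{\mathbf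 b}\,d\theta+2(W_{\mathbf b}-W_{\mathbf b}^2)\,r\,dr\wedge\theta+dW_{\mathbf b}\wedge\theta+dr\wedge(dW_{\mathbf b}\circ J_{\mathbb R}).$$
   Context: Identify $\mathbb R^{2n+2}=\mathbb R^{n+1}_{\mathbf x}\times\mathbb R^{n+1}_{\mathbf y}$ with $\mathbb C^{n+1}$ via $\mathbf z=\mathbf x+i\mathbf y$, and the open unit ball $\mathbb B^{2n+2}$ with the complex unit ball $\mathbb B^{n+1}_{\mathbb C}$. $J_{\mathbb R}$ is the complex structure with $J_{\mathbb R}(\partial_{x_j})=-\partial_{y_j}$, $J_{\mathbb R}(\partial_{y_j})=\partial_{x_j}$; a map $\Phi$ is $J_{\mathbb R}$-holomorphic if $J_{\mathbb R}\circ D\Phi=D\Phi\circ J_{\mathbb R}$. $r=|\mathbf z|$, and $\theta=r^{-2}\sum_j(x_j\,dy_j-y_j\,dx_j)$ on $\mathbb R^{2n+2}\setminus\{0\}$ (equivalently $\theta=\frac1r dr\circ J_{\mathbb R}$). The exterior derivative convention is $d\beta(X,Y)=X(\beta(Y))-Y(\beta(X))-\beta([X,Y])$. Pullbacks are of forms on $\mathbb R^{2n+2}$ evaluated at boundary points (not restricted to the sphere). *)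

theory Defs
  imports "HOL-Analysis.Analysis"
begin

text \<open>R^(2n+2) is identified with C^(n+1) = complex ^ 'n (CARD('n) = n+1),
  via z = x + i y, i.e. x_j = Re (z$j), y_j = Im (z$j).  Tangent vectors are elements
  of the same space; dx_j(v) = Re (v$j), dy_j(v) = Im (v$j).\<close>

fun iter_dderiv :: "('a::real_normed_vector \<Rightarrow> 'b::real_normed_vector) \<Rightarrow> 'a list \<Rightarrow> 'a \<Rightarrow> 'b" where
  "iter_dderiv f [] = f"
| "iter_dderiv f (v # vs) = (\<lambda>x. frechet_derivative (iter_dderiv f vs) (at x) v)"

definition smooth_on_open :: "'a::real_normed_vector set \<Rightarrow> ('a \<Rightarrow> 'b::real_normed_vector) \<Rightarrow> bool" where
  "smooth_on_open U f \<longleftrightarrow> open U \<and> (\<forall>vs. \<forall>x\<in>U. iter_dderiv f vs differentiable (at x))"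

definition smooth_on :: "'a::real_normed_vector set \<Rightarrow> ('a \<Rightarrow> 'b::real_normed_vector) \<Rightarrow> bool" where
  "smooth_on S f \<longleftrightarrow> (\<exists>U g. S \<subseteq> U \<and> smooth_on_open U g \<and> (\<forall>x\<in>S. g x = f x))"

definition diffeo_betw :: "'a::real_normed_vector set \<Rightarrow> 'a set \<Rightarrow> ('a \<Rightarrow> 'a) \<Rightarrow> bool" where
  "diffeo_betw S T f \<longleftrightarrow> bij_betw f S T \<and> smooth_on S f \<and>
     (\<exists>g. smooth_on T g \<and> (\<forall>x\<in>S. g (f x) = x) \<and> (\<forall>y\<in>T. f (g y) = y))"

text \<open>The complex structure J_R: J(d/dx_j) = - d/dy_j, J(d/dy_j) = d/dx_j.\<close>
definition JR :: "complex ^ 'n \<Rightarrow> complex ^ 'n" where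
  "JR v = (\<chi> j. Complex (Im (v $ j)) (- Re (v $ j)))"

definition JR_holomorphic_on :: "(complex ^ 'n) set \<Rightarrow> (complex ^ 'n \<Rightarrow> complex ^ 'n) \<Rightarrow> bool" where
  "JR_holomorphic_on S f \<longleftrightarrow>
     (\<forall>z\<in>S. \<exists>D. (f has_derivative D) (at z within S) \<and> (\<forall>v. JR (D v) = D (JR v)))"

definition dfun :: "('a::real_normed_vector \<Rightarrow> real) \<Rightarrow> 'a \<Rightarrow> 'a \<Rightarrow> real" where
  "dfun f p v = frechet_derivative f (at p) v"

definition rad :: "complex ^ 'n \<Rightarrow> real" where
  "rad z = norm z"

definition dr :: "complex ^ 'n \<Rightarrow> complex ^ 'n \<Rightarrow> real" where
  "dr = dfun rad"

definition theta :: "complex ^ 'n \<Rightarrow> complex ^ 'n \<Rightarrow> real" where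
  "theta p v = (\<Sum>j\<in>UNIV. Re (p $ j) * Im (v $ j) - Im (p $ j) * Re (v $ j)) / (rad p)\<^sup>2"

text \<open>Exterior derivative of a 1-form field, with
  d beta(X,Y) = X(beta(Y)) - Y(beta(X)) - beta([X,Y]), evaluated on constant vector fields.\<close>
definition d1 :: "('a::real_normed_vector \<Rightarrow> 'a \<Rightarrow> real) \<Rightarrow> 'a \<Rightarrow> 'a \<Rightarrow> 'a \<Rightarrow> real" where
  "d1 \<beta> p v w = frechet_derivative (\<lambda>q. \<beta> q w) (at p) v - frechet_derivative (\<lambda>q. \<beta> q v) (at p) w"

text \<open>Wedge product of 1-forms (convention compatible with d above: d(f dg) = df \<and> dg).\<close>
definition wedge :: "('a \<Rightarrow> 'a \<Rightarrow> real) \<Rightarrow> ('a \<Rightarrow> 'a \<Rightarrow> real) \<Rightarrow> 'a \<Rightarrow> 'a \<Rightarrow> 'a \<Rightarrow> real" where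
  "wedge \<alpha> \<beta> p v w = \<alpha> p v * \<beta> p w - \<alpha> p w * \<beta> p v"

definition compJ :: "(complex ^ 'n \<Rightarrow> complex ^ 'n \<Rightarrow> real) \<Rightarrow> complex ^ 'n \<Rightarrow> complex ^ 'n \<Rightarrow> real" where
  "compJ \<alpha> p v = \<alpha> p (JR v)"

definition pullback1 :: "('a \<Rightarrow> 'b) \<Rightarrow> ('a \<Rightarrow> 'b) \<Rightarrow> ('b \<Rightarrow> 'b \<Rightarrow> real) \<Rightarrow> 'a \<Rightarrow> 'a \<Rightarrow> real" where
  "pullback1 F D \<beta> p v = \<beta> (F p) (D v)"

definition pullback2 :: "('a \<Rightarrow> 'b) \<Rightarrow> ('a \<Rightarrow> 'b) \<Rightarrow> ('b \<Rightarrow> 'b \<Rightarrow> 'b \<Rightarrow> real) \<Rightarrow> 'a \<Rightarrow> 'a \<Rightarrow> 'a \<Rightarrow> real" where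
  "pullback2 F D \<omega> p v w = \<omega> (F p) (D v) (D w)"

definition bdot :: "complex ^ 'n \<Rightarrow> complex ^ 'n \<Rightarrow> complex" where
  "bdot b z = (\<Sum>j\<in>UNIV. cnj (b $ j) * z $ j)"

definition PhiB :: "complex ^ 'n \<Rightarrow> complex ^ 'n \<Rightarrow> complex ^ 'n" where
  "PhiB b z = (let s = sqrt (1 - (norm b)\<^sup>2) in
     (\<chi> j. complex_of_real s * z $ j / (1 + bdot b z)
        + complex_of_real (1 / (1 + s)) * (1 + complex_of_real s / (1 + bdot b z)) * b $ j))"

definition WB :: "complex ^ 'n \<Rightarrow> complex ^ 'n \<Rightarrow> real" where
  "WB b z = (1 - (\<Sum>j\<in>UNIV. (Re (b $ j))\<^sup>2) - (\<Sum>j\<in>UNIV. (Im (b $ j))\<^sup>2)) /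
     ((1 + (\<Sum>j\<in>UNIV. Re (b $ j) * Re (z $ j)) + (\<Sum>j\<in>UNIV. Im (b $ j) * Im (z $ j)))\<^sup>2
      + ((\<Sum>j\<in>UNIV. Im (b $ j) * Re (z $ j)) - (\<Sum>j\<in>UNIV. Re (b $ j) * Im (z $ j)))\<^sup>2)"

end

theory Submission
  imports Defs
begin

(*
  Write <z,w> = sum_j z_j cnj (w_j) and s = sqrt (1 - |b|^2).  Then Phi_b z = alpha z + beta b
  with alpha = s / (1 + <z,b>) and beta = (1 + alpha) / (1 + s), and Re (1 + <z,b>) > 0 on the
  closed ball.  So the components of Phi_b arise from C-linear functionals by field operations,
  which makes Phi_b smooth and J_R-holomorphic near the closed ball, and a direct computation
  gives Phi_(-b) o Phi_b = id and
    <Phi_b z, Phi_b w> = 1 - alpha(z) cnj (alpha(w)) (1 - <z,w>),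
  so Phi_b maps the closed ball and the sphere onto themselves.

  At a point p of the sphere the derivative D within the closed ball is unique, the ball being
  convex with nonempty interior.  There dr = Re <-,p>, theta = Im <-,p> and
  d theta (v,w) = 2 Im <w,v> - 2 (dr ^ theta) (v,w), while W_b = |alpha|^2 and
    <D v, Phi_b p> = W_b <v,p>,
    <D w, D v> = W_b <w,v> + cnj (delta v) <w,p> + delta w <p,v>,   delta = (d alpha) cnj alpha.
  The first identity gives the pullbacks of dr and theta.  In the second, Re delta = dW_b / 2
  and Im delta = (dW_b o J_R) / 2, which turns the correction terms into
  dW_b ^ theta + dr ^ (dW_b o J_R).
*)

section \<open>The Hermitian inner product on complex vectors\<close>

definition cinner :: "complex ^ 'n \<Rightarrow> complex ^ 'n \<Rightarrow> complex" where
  "cinner x y = (\<Sum>j\<in>UNIV. x $ j * cnj (y $ j))"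

lemma cinner_add_left: "cinner (x + y) z = cinner x z + cinner y z"
  by (simp add: cinner_def distrib_right sum.distrib)

lemma cinner_add_right: "cinner x (y + z) = cinner x y + cinner x z"
  by (simp add: cinner_def distrib_left sum.distrib)

lemma cinner_scale_left: "cinner (c *s x) y = c * cinner x y"
  by (simp add: cinner_def sum_distrib_left mult.assoc)

lemma cinner_scale_right: "cinner x (c *s y) = cnj c * cinner x y"
  by (simp add: cinner_def sum_distrib_left algebra_simps)

lemma cinner_minus_right: "cinner x (- y) = - cinner x y"
  by (simp add: cinner_def sum_negf)

lemma cnj_cinner: "cnj (cinner x y) = cinner y x"
  by (simp add: cinner_def mult.commute)

lemma Re_cinner_swap: "Re (cinner y x) = Re (cinner x y)"
  by (metis cnj_cinner cnj.sel(1))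

lemma Im_cinner_swap: "Im (cinner y x) = - Im (cinner x y)"
  by (metis cnj_cinner cnj.sel(2))

lemma inner_conv_cinner: "x \<bullet> y = Re (cinner x y)"
  by (simp add: cinner_def inner_vec_def inner_complex_def)

lemma cinner_self: "cinner x x = of_real ((norm x)\<^sup>2)"
  by (simp add: complex_eq_iff power2_norm_eq_inner inner_conv_cinner)
     (simp add: cinner_def algebra_simps)

lemma cinner_self_eq_1: "norm x = 1 \<Longrightarrow> cinner x x = 1"
  by (simp add: cinner_self)

lemma bounded_linear_cinner_left: "bounded_linear (\<lambda>x. cinner x y)"
proof -
  have "cinner (r *\<^sub>R x) y = r *\<^sub>R cinner x y" for r x
    by (simp add: cinner_def scaleR_sum_right)
  then have "linear (\<lambda>x. cinner x y)"
    by (intro linearI) (simp_all add: cinner_add_left)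
  then show ?thesis by (simp add: linear_conv_bounded_linear)
qed

lemma bounded_linear_cinner_right: "bounded_linear (\<lambda>y. cinner x y)"
  using bounded_linear_compose[OF bounded_linear_cnj bounded_linear_cinner_left[of x]]
  by (simp add: o_def cnj_cinner)

lemmas has_derivative_cinner_left [derivative_intros] =
  bounded_linear.has_derivative[OF bounded_linear_cinner_left]

lemmas has_derivative_cinner_right [derivative_intros] =
  bounded_linear.has_derivative[OF bounded_linear_cinner_right]

lemma JR_eq_scale: "JR v = (- \<i>) *s v"
  by (simp add: JR_def vec_eq_iff complex_eq_iff)

lemma cinner_JR_left: "cinner (JR v) y = - \<i> * cinner v y"
  by (simp only: JR_eq_scale cinner_scale_left)

lemma bdot_eq_cinner: "bdot b z = cinner z b"
  by (simp add: bdot_def cinner_def mult.commute)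

lemmas has_derivative_vec_nth [derivative_intros] =
  bounded_linear.has_derivative[OF bounded_linear_vec_nth]

lemma has_derivative_vec_lambda:
  fixes F :: "'n::finite \<Rightarrow> 'a::real_normed_vector \<Rightarrow> 'b::euclidean_space"
  assumes "\<And>j. (F j has_derivative D j) (at x within S)"
  shows "((\<lambda>y. \<chi> j. F j y) has_derivative (\<lambda>v. \<chi> j. D j v)) (at x within S)"
proof (subst has_derivative_componentwise_within, intro ballI)
  fix i :: "'b ^ 'n" assume "i \<in> Basis"
  then obtain k u where i: "i = axis k u" and "u \<in> Basis" unfolding Basis_vec_def by auto
  have "((\<lambda>y. F k y \<bullet> u) has_derivative (\<lambda>v. D k v \<bullet> u)) (at x within S)"
    using assms[of k] by (intro derivative_intros) auto
  then show "((\<lambda>y. (\<chi> j. F j y) \<bullet> i) has_derivative (\<lambda>v. (\<chi> j. D j v) \<bullet> i)) (at x within S)"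
    by (simp add: i inner_axis)
qed

section \<open>Uniqueness of derivatives within convex sets\<close>

lemma has_derivative_along_segment_unique:
  fixes f :: "'a::real_normed_vector \<Rightarrow> 'b::real_normed_vector"
  assumes D1: "(f has_derivative D1) (at x within S)" and D2: "(f has_derivative D2) (at x within S)"
    and "e > 0" and segment: "\<And>t. t \<in> {0..e} \<Longrightarrow> x + t *\<^sub>R u \<in> S"
  shows "D1 u = D2 u"
proof -
  let ?g = "\<lambda>t. x + t *\<^sub>R u"
  have g: "(?g has_derivative (\<lambda>t. t *\<^sub>R u)) (at 0 within cbox 0 e)"
    by (auto intro!: derivative_eq_intros)
  have image: "?g ` cbox 0 e \<subseteq> S" using segment by auto
  have "((\<lambda>t. f (?g t)) has_derivative (\<lambda>t. D (t *\<^sub>R u))) (at 0 within cbox 0 e)"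
    if "(f has_derivative D) (at x within S)" for D
  proof -
    have "(f has_derivative D) (at (?g 0) within ?g ` cbox 0 e)"
      using has_derivative_subset[OF that image] by simp
    from has_derivative_in_compose[OF g this] show ?thesis .
  qed
  then have "(\<lambda>t. D1 (t *\<^sub>R u)) = (\<lambda>t. D2 (t *\<^sub>R u))"
    using D1 D2 \<open>e > 0\<close> by (intro frechet_derivative_unique_within_closed_interval[of 0 e 0]) auto
  then show ?thesis by (metis scaleR_one)
qed

lemma has_derivative_within_convex_unique:
  fixes f :: "'a::real_normed_vector \<Rightarrow> 'b::real_normed_vector"
  assumes D1: "(f has_derivative D1) (at x within S)" and D2: "(f has_derivative D2) (at x within S)"
    and "convex S" "x \<in> S" "interior S \<noteq> {}"
  shows "D1 = D2"
proof (rule ext)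
  fix v :: 'a
  obtain y e where "e > 0" and ball: "ball y e \<subseteq> S"
    using \<open>interior S \<noteq> {}\<close> by (metis all_not_in_conv mem_interior)
  have towards_ball: "D1 (z - x) = D2 (z - x)" if "z \<in> ball y e" for z
  proof (rule has_derivative_along_segment_unique[OF D1 D2 zero_less_one])
    fix t :: real assume "t \<in> {0..1}"
    then have "(1 - t) *\<^sub>R x + t *\<^sub>R z \<in> S"
      using \<open>convex S\<close> \<open>x \<in> S\<close> ball that by (intro convexD_alt) auto
    then show "x + t *\<^sub>R (z - x) \<in> S" by (simp add: algebra_simps)
  qed
  define d where "d = e / (norm v + 1)"
  have "norm v + 1 > 0" using norm_ge_zero[of v] by linarith
  then have "d > 0" and "d * (norm v + 1) = e" using \<open>e > 0\<close> by (simp_all add: d_def)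
  then have "norm (d *\<^sub>R v) < e" by (simp add: algebra_simps)
  then have "y + d *\<^sub>R v \<in> ball y e" "y \<in> ball y e" using \<open>e > 0\<close> by (auto simp: dist_norm)
  then have "D1 (y + d *\<^sub>R v - x) - D1 (y - x) = D2 (y + d *\<^sub>R v - x) - D2 (y - x)"
    using towards_ball by simp
  moreover have "D (y + d *\<^sub>R v - x) - D (y - x) = d *\<^sub>R D v" if "linear D" for D :: "'a \<Rightarrow> 'b"
    using that by (simp add: linear_diff[symmetric] linear_scale algebra_simps)
  ultimately have "d *\<^sub>R D1 v = d *\<^sub>R D2 v"
    using has_derivative_linear[OF D1] has_derivative_linear[OF D2] by metis
  then show "D1 v = D2 v" using \<open>d > 0\<close> by simp
qed

section \<open>Holomorphic rational functions are smooth\<close>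

inductive holomorphic_rational :: "(complex ^ 'n) set \<Rightarrow> (complex ^ 'n \<Rightarrow> complex) \<Rightarrow> bool"
  for U where
  const: "holomorphic_rational U (\<lambda>x. c)"
| linear: "bounded_linear L \<Longrightarrow> (\<And>v. L (JR v) = - \<i> * L v) \<Longrightarrow> holomorphic_rational U L"
| add: "holomorphic_rational U f \<Longrightarrow> holomorphic_rational U g \<Longrightarrow> holomorphic_rational U (\<lambda>x. f x + g x)"
| mult: "holomorphic_rational U f \<Longrightarrow> holomorphic_rational U g \<Longrightarrow> holomorphic_rational U (\<lambda>x. f x * g x)"
| inverse: "holomorphic_rational U f \<Longrightarrow> (\<And>x. x \<in> U \<Longrightarrow> f x \<noteq> 0) \<Longrightarrow>
    holomorphic_rational U (\<lambda>x. inverse (f x))"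

lemma holomorphic_rational_minus:
  "holomorphic_rational U f \<Longrightarrow> holomorphic_rational U (\<lambda>x. - f x)"
  using holomorphic_rational.mult[OF holomorphic_rational.const[of U "- 1"]] by simp

definition cderivative_on ::
    "(complex ^ 'n) set \<Rightarrow> (complex ^ 'n \<Rightarrow> complex) \<Rightarrow> (complex ^ 'n \<Rightarrow> complex ^ 'n \<Rightarrow> complex) \<Rightarrow> bool"
  where "cderivative_on U f f' \<longleftrightarrow>
    (\<forall>x\<in>U. (f has_derivative (\<lambda>v. f' v x)) (at x) \<and> (\<forall>v. f' (JR v) x = - \<i> * f' v x))"

lemma cderivative_on_add:
  "cderivative_on U f f' \<Longrightarrow> cderivative_on U g g' \<Longrightarrow>
    cderivative_on U (\<lambda>x. f x + g x) (\<lambda>v x. f' v x + g' v x)"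
  by (auto simp: cderivative_on_def algebra_simps intro: has_derivative_add)

lemma cderivative_on_mult:
  assumes "cderivative_on U f f'" "cderivative_on U g g'"
  shows "cderivative_on U (\<lambda>x. f x * g x) (\<lambda>v x. f x * g' v x + f' v x * g x)"
  unfolding cderivative_on_def
proof (intro ballI conjI allI)
  fix x v assume "x \<in> U"
  with assms show "((\<lambda>x. f x * g x) has_derivative (\<lambda>v. f x * g' v x + f' v x * g x)) (at x)"
    by (auto simp: cderivative_on_def intro: has_derivative_mult)
  from \<open>x \<in> U\<close> assms show "f x * g' (JR v) x + f' (JR v) x * g x = - \<i> * (f x * g' v x + f' v x * g x)"
    by (simp add: cderivative_on_def algebra_simps)
qed

lemma cderivative_on_inverse:
  assumes "cderivative_on U f f'" "\<And>x. x \<in> U \<Longrightarrow> f x \<noteq> 0"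
  shows "cderivative_on U (\<lambda>x. inverse (f x)) (\<lambda>v x. - (inverse (f x) * f' v x * inverse (f x)))"
  unfolding cderivative_on_def
proof (intro ballI conjI allI)
  fix x v assume "x \<in> U"
  with assms show "((\<lambda>x. inverse (f x)) has_derivative (\<lambda>v. - (inverse (f x) * f' v x * inverse (f x)))) (at x)"
    by (intro Deriv.has_derivative_inverse) (auto simp: cderivative_on_def)
  from \<open>x \<in> U\<close> assms(1) show "- (inverse (f x) * f' (JR v) x * inverse (f x))
      = - \<i> * - (inverse (f x) * f' v x * inverse (f x))"
    by (simp add: cderivative_on_def algebra_simps)
qed

lemma holomorphic_rational_cderivative_on:
  assumes "holomorphic_rational U f"
  shows "\<exists>f'. cderivative_on U f f' \<and> (\<forall>v. holomorphic_rational U (f' v))"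
  using assms
proof induction
  case (const c)
  show ?case
    by (rule exI[of _ "\<lambda>v x. 0"]) (simp add: cderivative_on_def holomorphic_rational.const)
next
  case (linear L)
  show ?case
    by (rule exI[of _ "\<lambda>v x. L v"])
       (auto simp: cderivative_on_def linear.hyps intro: bounded_linear.has_derivative[OF linear.hyps(1)]
         has_derivative_ident holomorphic_rational.const)
next
  case (add f g)
  then obtain f' g' where "cderivative_on U f f'" "cderivative_on U g g'"
    "\<forall>v. holomorphic_rational U (f' v)" "\<forall>v. holomorphic_rational U (g' v)" by blast
  then show ?case by (blast intro: cderivative_on_add holomorphic_rational.add)
next
  case (mult f g)
  then obtain f' g' where "cderivative_on U f f'" "cderivative_on U g g'"
    "\<forall>v. holomorphic_rational U (f' v)" "\<forall>v. holomorphic_rational U (g' v)" by blast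
  with mult.hyps show ?case
    by (intro exI[of _ "\<lambda>v x. f x * g' v x + f' v x * g x"])
       (auto intro!: cderivative_on_mult holomorphic_rational.add holomorphic_rational.mult)
next
  case (inverse f)
  then obtain f' where "cderivative_on U f f'" "\<forall>v. holomorphic_rational U (f' v)" by blast
  moreover have "holomorphic_rational U (\<lambda>x. inverse (f x))"
    using inverse.hyps by (rule holomorphic_rational.inverse)
  ultimately show ?case using inverse.hyps
    by (intro exI[of _ "\<lambda>v x. - (inverse (f x) * f' v x * inverse (f x))"])
       (auto intro!: cderivative_on_inverse holomorphic_rational_minus holomorphic_rational.mult)
qed

lemma holomorphic_rational_vec_has_derivative:
  fixes F :: "complex ^ 'n \<Rightarrow> complex ^ 'n"
  assumes "\<And>j. holomorphic_rational U (\<lambda>x. F x $ j)"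
  shows "\<exists>F'. (\<forall>x\<in>U. (F has_derivative (\<lambda>v. F' v x)) (at x) \<and> (\<forall>v. F' (JR v) x = JR (F' v x)))
           \<and> (\<forall>v j. holomorphic_rational U (\<lambda>x. F' v x $ j))"
proof -
  obtain f' where f': "\<And>j. \<forall>x\<in>U. ((\<lambda>x. F x $ j) has_derivative (\<lambda>v. f' j v x)) (at x)
      \<and> (\<forall>v. f' j (JR v) x = - \<i> * f' j v x)"
    "\<And>j v. holomorphic_rational U (f' j v)"
    using holomorphic_rational_cderivative_on[OF assms] unfolding cderivative_on_def by metis
  show ?thesis
  proof (intro exI[of _ "\<lambda>v x. \<chi> j. f' j v x"] conjI ballI allI)
    fix x v assume "x \<in> U"
    then have "((\<lambda>x. \<chi> j. F x $ j) has_derivative (\<lambda>v. \<chi> j. f' j v x)) (at x)"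
      using f' by (intro has_derivative_vec_lambda) blast
    then show "(F has_derivative (\<lambda>v. \<chi> j. f' j v x)) (at x)" by simp
    show "(\<chi> j. f' j (JR v) x) = JR (\<chi> j. f' j v x)"
      using f' \<open>x \<in> U\<close> by (simp add: JR_eq_scale vec_eq_iff)
  qed (simp add: f')
qed

lemma iter_dderiv_holomorphic_rational:
  fixes F :: "complex ^ 'n \<Rightarrow> complex ^ 'n"
  assumes "open U" "\<And>j. holomorphic_rational U (\<lambda>x. F x $ j)"
  shows "\<exists>G. (\<forall>j. holomorphic_rational U (\<lambda>x. G x $ j)) \<and> (\<forall>x\<in>U. iter_dderiv F vs x = G x)"
proof (induction vs)
  case Nil
  show ?case using assms(2) by auto
next
  case (Cons v vs)
  then obtain G where G: "\<And>j. holomorphic_rational U (\<lambda>x. G x $ j)"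
    and agree: "\<forall>x\<in>U. iter_dderiv F vs x = G x" by blast
  obtain G' where G': "\<forall>x\<in>U. (G has_derivative (\<lambda>v. G' v x)) (at x)"
    "\<And>v j. holomorphic_rational U (\<lambda>x. G' v x $ j)"
    using holomorphic_rational_vec_has_derivative[OF G] by blast
  have "iter_dderiv F (v # vs) x = G' v x" if "x \<in> U" for x
  proof -
    have "(iter_dderiv F vs has_derivative (\<lambda>v. G' v x)) (at x)"
      using has_derivative_transform_within_open[where f = G and s = U and t = UNIV] G' agree \<open>open U\<close> that by auto
    then show ?thesis by (simp add: frechet_derivative_at[symmetric])
  qed
  with G' show ?case by blast
qed

lemma smooth_on_open_holomorphic_rational:
  fixes F :: "complex ^ 'n \<Rightarrow> complex ^ 'n"
  assumes "open U" "\<And>j. holomorphic_rational U (\<lambda>x. F x $ j)"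
  shows "smooth_on_open U F"
  unfolding smooth_on_open_def
proof (intro conjI allI ballI \<open>open U\<close>)
  fix vs x assume "x \<in> U"
  obtain G where G: "\<And>j. holomorphic_rational U (\<lambda>x. G x $ j)"
    and agree: "\<forall>x\<in>U. iter_dderiv F vs x = G x"
    using iter_dderiv_holomorphic_rational[OF assms] by blast
  obtain G' where "\<forall>x\<in>U. (G has_derivative (\<lambda>v. G' v x)) (at x)"
    using holomorphic_rational_vec_has_derivative[OF G] by blast
  then have "(iter_dderiv F vs has_derivative (\<lambda>v. G' v x)) (at x)"
    using has_derivative_transform_within_open[where f = G and s = U and t = UNIV] agree \<open>open U\<close> \<open>x \<in> U\<close> by auto
  then show "iter_dderiv F vs differentiable at x"
    unfolding differentiable_def by blast
qed

section \<open>The automorphism of the ball\<close>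

definition sB :: "complex ^ 'n \<Rightarrow> real" where
  "sB b = sqrt (1 - (norm b)\<^sup>2)"

definition alphaB :: "complex ^ 'n \<Rightarrow> complex ^ 'n \<Rightarrow> complex" where
  "alphaB b z = of_real (sB b) / (1 + cinner z b)"

definition betaB :: "complex ^ 'n \<Rightarrow> complex ^ 'n \<Rightarrow> complex" where
  "betaB b z = (1 + alphaB b z) / (1 + of_real (sB b))"

lemma PhiB_eq: "PhiB b z = alphaB b z *s z + betaB b z *s b"
  by (simp add: PhiB_def alphaB_def betaB_def sB_def bdot_eq_cinner vec_eq_iff Let_def
      add_divide_distrib distrib_right)

lemma sB_pos: "norm b < 1 \<Longrightarrow> sB b > 0"
  by (simp add: sB_def abs_square_less_1)

lemma sB_square: "norm b < 1 \<Longrightarrow> (sB b)\<^sup>2 = 1 - (norm b)\<^sup>2"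
  by (simp add: sB_def abs_square_less_1 less_imp_le)

lemma sB_uminus: "sB (- b) = sB b"
  by (simp add: sB_def)

lemma cinner_self_sB: "norm b < 1 \<Longrightarrow> cinner b b = 1 - (of_real (sB b))\<^sup>2"
  by (simp add: cinner_self sB_square flip: of_real_power)

lemma one_plus_sB_nonzero: "norm b < 1 \<Longrightarrow> 1 + complex_of_real (sB b) \<noteq> 0"
  using sB_pos[of b] by (metis add_pos_pos of_real_1 of_real_add of_real_eq_0_iff zero_less_one less_irrefl)

lemma Re_denominator_pos:
  assumes "norm b < 1" "norm z \<le> 1"
  shows "Re (1 + cinner z b) > 0"
proof -
  have "- (z \<bullet> b) \<le> norm z * norm b"
    using norm_cauchy_schwarz[of "- z" b] by simp
  also have "\<dots> \<le> norm b" using assms by (simp add: mult_left_le_one_le)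
  finally show ?thesis using assms by (simp add: inner_conv_cinner)
qed

lemma denominator_nonzero: "norm b < 1 \<Longrightarrow> norm z \<le> 1 \<Longrightarrow> 1 + cinner z b \<noteq> 0"
  using Re_denominator_pos by fastforce

(* Expanding the Hermitian products and eliminating alphaB, betaB and dalphaB through these
   polynomial relations reduces the identities for Phi_b below to ideal membership, which
   algebra decides. *)
lemma alphaB_relation: "1 + cinner z b \<noteq> 0 \<Longrightarrow> alphaB b z * cinner z b = of_real (sB b) - alphaB b z"
  by (simp add: alphaB_def field_simps)

lemma betaB_relation: "norm b < 1 \<Longrightarrow> betaB b z * (1 + of_real (sB b)) = 1 + alphaB b z"
  by (simp add: betaB_def one_plus_sB_nonzero)

lemma cnj_alphaB_relation:
  "1 + cinner z b \<noteq> 0 \<Longrightarrow> cnj (alphaB b z) * cinner b z = of_real (sB b) - cnj (alphaB b z)"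
  using arg_cong[where f = cnj, OF alphaB_relation] by (simp add: cnj_cinner)

lemma cnj_betaB_relation: "norm b < 1 \<Longrightarrow> cnj (betaB b z) * (1 + of_real (sB b)) = 1 + cnj (alphaB b z)"
  using arg_cong[where f = cnj, OF betaB_relation] by simp

lemma cinner_PhiB_PhiB:
  assumes b: "norm b < 1" and "1 + cinner z b \<noteq> 0" "1 + cinner w b \<noteq> 0"
  shows "cinner (PhiB b z) (PhiB b w) = 1 - alphaB b z * cnj (alphaB b w) * (1 - cinner z w)"
  unfolding PhiB_eq cinner_add_left cinner_add_right cinner_scale_left cinner_scale_right cinner_self_sB[OF b]
  using alphaB_relation[OF assms(2)] betaB_relation[OF b, of z] cnj_alphaB_relation[OF assms(3)]
    cnj_betaB_relation[OF b, of w] one_plus_sB_nonzero[OF b]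
  by algebra

lemma norm_PhiB_square:
  assumes "norm b < 1" "1 + cinner z b \<noteq> 0"
  shows "(norm (PhiB b z))\<^sup>2 = 1 - (cmod (alphaB b z))\<^sup>2 * (1 - (norm z)\<^sup>2)"
proof -
  have "complex_of_real ((norm (PhiB b z))\<^sup>2) = 1 - alphaB b z * cnj (alphaB b z) * (1 - of_real ((norm z)\<^sup>2))"
    using cinner_PhiB_PhiB[OF assms assms(2)] by (simp only: cinner_self)
  also have "\<dots> = of_real (1 - (cmod (alphaB b z))\<^sup>2 * (1 - (norm z)\<^sup>2))"
    by (simp only: complex_norm_square of_real_diff of_real_mult of_real_1)
  finally show ?thesis by (rule of_real_eq_iff[THEN iffD1])
qed

lemma norm_PhiB_le_1:
  assumes "norm b < 1" "norm z \<le> 1"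
  shows "norm (PhiB b z) \<le> 1"
proof -
  have "(norm z)\<^sup>2 \<le> 1" using assms(2) by (simp add: power_le_one)
  then have "(norm (PhiB b z))\<^sup>2 \<le> 1"
    by (simp add: norm_PhiB_square[OF assms(1) denominator_nonzero[OF assms]])
  then show ?thesis by (simp add: power_le_one_iff)
qed

lemma norm_PhiB_eq_1:
  assumes "norm b < 1" "norm z = 1"
  shows "norm (PhiB b z) = 1"
  using norm_PhiB_square[OF assms(1) denominator_nonzero[OF assms(1)], of z] assms(2)
  by (simp add: abs_square_eq_1)

lemma cinner_PhiB_left_b:
  assumes "norm b < 1" "1 + cinner z b \<noteq> 0"
  shows "cinner (PhiB b z) b = 1 - of_real (sB b) * alphaB b z"
  unfolding PhiB_eq cinner_add_left cinner_scale_left cinner_self_sB[OF assms(1)]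
  using alphaB_relation[OF assms(2)] betaB_relation[OF assms(1), of z] one_plus_sB_nonzero[OF assms(1)]
  by algebra

lemma PhiB_uminus_PhiB:
  assumes b: "norm b < 1" and z: "1 + cinner z b \<noteq> 0"
  shows "PhiB (- b) (PhiB b z) = z"
proof -
  define w where "w = PhiB b z"
  let ?S = "complex_of_real (sB b)" and ?A = "alphaB b z"
  have "?S \<noteq> 0" using sB_pos[OF b] by simp
  then have "?A \<noteq> 0" using z by (simp add: alphaB_def)
  have "1 + cinner w (- b) = ?S * ?A"
    using cinner_PhiB_left_b[OF b z] by (simp add: w_def cinner_minus_right)
  then have inv_alpha: "alphaB (- b) w * ?A = 1"
    using \<open>?S \<noteq> 0\<close> \<open>?A \<noteq> 0\<close> by (simp add: alphaB_def sB_uminus)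
  then have "(1 + alphaB (- b) w) * ?A = 1 + ?A"
    by (simp add: distrib_right)
  then have inv_beta: "betaB (- b) w * ?A = betaB b z"
    by (simp add: betaB_def sB_uminus)
  have "PhiB (- b) w $ j = z $ j" for j
  proof -
    have "w $ j = ?A * z $ j + betaB b z * b $ j"
      by (simp add: w_def PhiB_eq)
    then have "PhiB (- b) w $ j = alphaB (- b) w * (?A * z $ j + betaB b z * b $ j) - betaB (- b) w * b $ j"
      by (simp add: PhiB_eq[of "- b" w])
    also have "\<dots> = z $ j"
      using inv_alpha inv_beta by algebra
    finally show ?thesis .
  qed
  then show ?thesis by (simp add: vec_eq_iff w_def)
qed

definition dalphaB :: "complex ^ 'n \<Rightarrow> complex ^ 'n \<Rightarrow> complex ^ 'n \<Rightarrow> complex" where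
  "dalphaB b z v = - alphaB b z * cinner v b / (1 + cinner z b)"

definition DPhiB :: "complex ^ 'n \<Rightarrow> complex ^ 'n \<Rightarrow> complex ^ 'n \<Rightarrow> complex ^ 'n" where
  "DPhiB b z v = alphaB b z *s v + dalphaB b z v *s z + (dalphaB b z v / (1 + of_real (sB b))) *s b"

lemma dalphaB_relation:
  "1 + cinner z b \<noteq> 0 \<Longrightarrow> dalphaB b z v * cinner z b = - alphaB b z * cinner v b - dalphaB b z v"
  by (simp add: dalphaB_def field_simps)

lemma cnj_dalphaB_relation: "1 + cinner z b \<noteq> 0 \<Longrightarrow>
    cnj (dalphaB b z v) * cinner b z = - cnj (alphaB b z) * cinner b v - cnj (dalphaB b z v)"
  using arg_cong[where f = cnj, OF dalphaB_relation] by (simp add: cnj_cinner)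

lemma alphaB_has_derivative:
  assumes "1 + cinner z b \<noteq> 0"
  shows "(alphaB b has_derivative dalphaB b z) (at z within T)"
proof -
  have "((\<lambda>z. of_real (sB b) / (1 + cinner z b)) has_derivative dalphaB b z) (at z within T)"
    using assms by (auto intro!: derivative_eq_intros simp: dalphaB_def alphaB_def power2_eq_square)
  then show ?thesis by (simp add: alphaB_def[abs_def])
qed

lemma PhiB_has_derivative:
  assumes "norm b < 1" "1 + cinner z b \<noteq> 0"
  shows "(PhiB b has_derivative DPhiB b z) (at z within T)"
proof -
  have "((\<lambda>y. \<chi> j. alphaB b y * y $ j + (1 + alphaB b y) * (b $ j / (1 + of_real (sB b))))
      has_derivative (\<lambda>v. \<chi> j. DPhiB b z v $ j)) (at z within T)"
    using alphaB_has_derivative[OF assms(2)] one_plus_sB_nonzero[OF assms(1)]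
    by (intro has_derivative_vec_lambda) (auto intro!: derivative_eq_intros simp: DPhiB_def)
  moreover have "(\<lambda>y. \<chi> j. alphaB b y * y $ j + (1 + alphaB b y) * (b $ j / (1 + of_real (sB b)))) = PhiB b"
    by (simp add: fun_eq_iff vec_eq_iff PhiB_eq betaB_def)
  ultimately show ?thesis by simp
qed

lemma dalphaB_JR: "dalphaB b z (JR v) = - \<i> * dalphaB b z v"
  by (simp add: dalphaB_def cinner_JR_left)

lemma DPhiB_JR: "DPhiB b z (JR v) = JR (DPhiB b z v)"
  unfolding DPhiB_def dalphaB_JR by (simp add: JR_eq_scale vec_eq_iff algebra_simps)

lemma JR_holomorphic_on_PhiB:
  fixes b :: "complex ^ 'n"
  assumes "norm b < 1"
  shows "JR_holomorphic_on (cball 0 1) (PhiB b)"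
  unfolding JR_holomorphic_on_def
proof
  fix z :: "complex ^ 'n" assume "z \<in> cball 0 1"
  then have "(PhiB b has_derivative DPhiB b z) (at z within cball 0 1)"
    using PhiB_has_derivative[OF assms denominator_nonzero[OF assms]] by simp
  moreover have "\<forall>v. JR (DPhiB b z v) = DPhiB b z (JR v)" by (simp add: DPhiB_JR)
  ultimately show "\<exists>D. (PhiB b has_derivative D) (at z within cball 0 1) \<and> (\<forall>v. JR (D v) = D (JR v))"
    by blast
qed

lemma holomorphic_rational_PhiB:
  "holomorphic_rational {z. 1 + cinner z b \<noteq> 0} (\<lambda>z. PhiB b z $ j)"
proof -
  let ?U = "{z. 1 + cinner z b \<noteq> 0}" and ?S = "complex_of_real (sB b)"
  have coordinate: "holomorphic_rational ?U (\<lambda>z. z $ j)"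
    by (rule holomorphic_rational.linear) (simp_all add: bounded_linear_vec_nth JR_eq_scale)
  have "holomorphic_rational ?U (\<lambda>z. cinner z b)"
    by (rule holomorphic_rational.linear) (simp_all add: bounded_linear_cinner_left cinner_JR_left)
  then have "holomorphic_rational ?U (\<lambda>z. inverse (1 + cinner z b))"
    by (intro holomorphic_rational.inverse holomorphic_rational.add holomorphic_rational.const) auto
  then have alpha: "holomorphic_rational ?U (alphaB b)"
    using holomorphic_rational.mult[OF holomorphic_rational.const[of _ ?S]]
    by (simp add: alphaB_def[abs_def] divide_inverse)
  have "holomorphic_rational ?U (\<lambda>z. alphaB b z * z $ j + (1 + alphaB b z) * (b $ j / (1 + ?S)))"
    by (intro holomorphic_rational.intros alpha coordinate)
  then show ?thesis by (simp add: PhiB_eq betaB_def)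
qed

lemma smooth_on_PhiB:
  assumes "norm b < 1"
  shows "smooth_on (cball 0 1) (PhiB b)"
  unfolding smooth_on_def
proof (intro exI conjI)
  show "cball 0 1 \<subseteq> {z. 1 + cinner z b \<noteq> 0}" using denominator_nonzero[OF assms] by auto
  have "open {z. 1 + cinner z b \<noteq> 0}"
    by (intro open_Collect_neq continuous_intros linear_continuous_on bounded_linear_cinner_left)
  then show "smooth_on_open {z. 1 + cinner z b \<noteq> 0} (PhiB b)"
    by (rule smooth_on_open_holomorphic_rational) (rule holomorphic_rational_PhiB)
qed simp

lemma diffeo_betw_PhiB:
  assumes "norm b < 1"
  shows "diffeo_betw (cball 0 1) (cball 0 1) (PhiB b)"
proof -
  have "norm (- b) < 1" using assms by simp
  have left: "\<forall>z\<in>cball 0 1. PhiB (- b) (PhiB b z) = z"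
    using PhiB_uminus_PhiB[OF assms] denominator_nonzero[OF assms] by auto
  have right: "\<forall>z\<in>cball 0 1. PhiB b (PhiB (- b) z) = z"
    using PhiB_uminus_PhiB[OF \<open>norm (- b) < 1\<close>] denominator_nonzero[OF \<open>norm (- b) < 1\<close>] by auto
  have "PhiB b ` cball 0 1 \<subseteq> cball 0 1" "PhiB (- b) ` cball 0 1 \<subseteq> cball 0 1"
    using norm_PhiB_le_1[OF assms] norm_PhiB_le_1[OF \<open>norm (- b) < 1\<close>] by auto
  then show ?thesis
    unfolding diffeo_betw_def
    using bij_betw_byWitness[OF left right] smooth_on_PhiB[OF assms] smooth_on_PhiB[OF \<open>norm (- b) < 1\<close>]
      left right by blast
qed

section \<open>Forms on the sphere and the conformal factor\<close>

lemma theta_eq_cinner: "theta p v = Im (cinner v p) / (norm p)\<^sup>2"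
  by (simp add: theta_def rad_def cinner_def algebra_simps)

lemma dr_sphere:
  assumes "norm p = 1"
  shows "dr p v = Re (cinner v p)"
proof -
  have "p \<noteq> 0" using assms by auto
  then have "(rad has_derivative (\<lambda>v. v \<bullet> p)) (at p)"
    using has_derivative_norm[of p] assms by (simp add: rad_def[abs_def] sgn_div_norm)
  then show ?thesis
    by (simp add: dr_def dfun_def frechet_derivative_at[symmetric] inner_conv_cinner)
qed

lemma theta_sphere: "norm p = 1 \<Longrightarrow> theta p v = Im (cinner v p)"
  by (simp add: theta_eq_cinner)

lemma theta_has_derivative:
  assumes "q \<noteq> 0"
  shows "((\<lambda>q. theta q w) has_derivative
     (\<lambda>u. Im (cinner w u) / (q \<bullet> q) - Im (cinner w q) * (2 * (q \<bullet> u)) / (q \<bullet> q)\<^sup>2)) (at q)"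
proof -
  have "(\<lambda>q. theta q w) = (\<lambda>q. Im (cinner w q) * inverse (q \<bullet> q))"
    by (simp add: fun_eq_iff theta_eq_cinner power2_norm_eq_inner divide_inverse)
  moreover have "q \<bullet> q \<noteq> 0" using assms by simp
  ultimately show ?thesis
    by (auto intro!: derivative_eq_intros simp: field_simps inner_commute power2_eq_square)
qed

lemma d1_theta_sphere:
  assumes "norm p = 1"
  shows "d1 theta p v w = 2 * Im (cinner w v) - 2 * wedge dr theta p v w"
proof -
  have "p \<noteq> 0" "p \<bullet> p = 1" using assms by (auto simp: dot_square_norm)
  have "p \<bullet> u = Re (cinner u p)" for u by (metis inner_commute inner_conv_cinner)
  then have "frechet_derivative (\<lambda>q. theta q w) (at p) u = Im (cinner w u) - 2 * Im (cinner w p) * Re (cinner u p)"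
    for u w
    using theta_has_derivative[OF \<open>p \<noteq> 0\<close>, of w] \<open>p \<bullet> p = 1\<close> by (simp add: frechet_derivative_at[symmetric])
  then show ?thesis
    using assms by (simp add: d1_def wedge_def dr_sphere theta_sphere Im_cinner_swap[of v w] algebra_simps)
qed

lemma norm_square_sum: "(norm b)\<^sup>2 = (\<Sum>j\<in>UNIV. (Re (b $ j))\<^sup>2) + (\<Sum>j\<in>UNIV. (Im (b $ j))\<^sup>2)"
proof -
  have "(norm b)\<^sup>2 = Re (cinner b b)" by (simp add: cinner_self)
  then show ?thesis by (simp add: cinner_def sum.distrib power2_eq_square)
qed

lemma Re_cinner_sum:
  "Re (cinner z b) = (\<Sum>j\<in>UNIV. Re (b $ j) * Re (z $ j)) + (\<Sum>j\<in>UNIV. Im (b $ j) * Im (z $ j))"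
  by (simp add: cinner_def sum.distrib mult.commute)

lemma Im_cinner_sum:
  "Im (cinner z b) = (\<Sum>j\<in>UNIV. Re (b $ j) * Im (z $ j)) - (\<Sum>j\<in>UNIV. Im (b $ j) * Re (z $ j))"
  by (simp add: cinner_def sum_subtractf mult.commute)

lemma WB_eq:
  assumes "norm b < 1"
  shows "WB b z = (cmod (alphaB b z))\<^sup>2"
proof -
  have "1 - (\<Sum>j\<in>UNIV. (Re (b $ j))\<^sup>2) - (\<Sum>j\<in>UNIV. (Im (b $ j))\<^sup>2) = (sB b)\<^sup>2"
    using sB_square[OF assms] norm_square_sum[of b] by simp
  moreover have "(1 + (\<Sum>j\<in>UNIV. Re (b $ j) * Re (z $ j)) + (\<Sum>j\<in>UNIV. Im (b $ j) * Im (z $ j)))\<^sup>2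
      + ((\<Sum>j\<in>UNIV. Im (b $ j) * Re (z $ j)) - (\<Sum>j\<in>UNIV. Re (b $ j) * Im (z $ j)))\<^sup>2
      = (cmod (1 + cinner z b))\<^sup>2"
    by (simp add: cmod_power2 Re_cinner_sum Im_cinner_sum power2_commute add.assoc)
  ultimately show ?thesis
    by (simp add: WB_def alphaB_def norm_divide power_divide)
qed

lemma of_real_WB:
  assumes "norm b < 1"
  shows "of_real (WB b z) = alphaB b z * cnj (alphaB b z)"
  by (simp only: WB_eq[OF assms] complex_norm_square)

lemma WB_has_derivative:
  assumes "norm b < 1" "1 + cinner z b \<noteq> 0"
  shows "(WB b has_derivative (\<lambda>v. 2 * Re (dalphaB b z v * cnj (alphaB b z)))) (at z)"
proof -
  have "WB b = (\<lambda>z. (Re (alphaB b z))\<^sup>2 + (Im (alphaB b z))\<^sup>2)"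
    using assms(1) by (simp add: fun_eq_iff WB_eq cmod_power2)
  then show ?thesis
    using alphaB_has_derivative[OF assms(2)]
    by (auto intro!: derivative_eq_intros simp: algebra_simps)
qed

lemma dfun_WB:
  assumes "norm b < 1" "1 + cinner z b \<noteq> 0"
  shows "dfun (WB b) z v = 2 * Re (dalphaB b z v * cnj (alphaB b z))"
  using WB_has_derivative[OF assms] by (simp add: dfun_def frechet_derivative_at[symmetric])

lemma compJ_dfun_WB:
  assumes "norm b < 1" "1 + cinner z b \<noteq> 0"
  shows "compJ (dfun (WB b)) z v = 2 * Im (dalphaB b z v * cnj (alphaB b z))"
  by (simp add: compJ_def dfun_WB[OF assms] dalphaB_JR)

section \<open>Pullbacks along the automorphism\<close>

lemma cinner_DPhiB_PhiB:
  assumes b: "norm b < 1" and p: "norm p = 1"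
  shows "cinner (DPhiB b p v) (PhiB b p) = of_real (WB b p) * cinner v p"
proof -
  let ?S = "complex_of_real (sB b)"
  have d: "1 + cinner p b \<noteq> 0" using denominator_nonzero[OF b] p by simp
  have dbeta: "dalphaB b p v / (1 + ?S) * (1 + ?S) = dalphaB b p v"
    using one_plus_sB_nonzero[OF b] by simp
  show ?thesis
    unfolding DPhiB_def PhiB_eq cinner_add_left cinner_add_right cinner_scale_left cinner_scale_right
      cinner_self_sB[OF b] of_real_WB[OF b]
    using cnj_alphaB_relation[OF d] cnj_betaB_relation[OF b, of p] dbeta cinner_self_eq_1[OF p]
      alphaB_relation[OF d] betaB_relation[OF b, of p] dalphaB_relation[OF d, of v]
      one_plus_sB_nonzero[OF b]
    by algebra
qed

lemma cinner_DPhiB_DPhiB: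
  assumes b: "norm b < 1" and p: "norm p = 1"
  shows "cinner (DPhiB b p w) (DPhiB b p v) = of_real (WB b p) * cinner w v
    + cnj (dalphaB b p v * cnj (alphaB b p)) * cinner w p + dalphaB b p w * cnj (alphaB b p) * cinner p v"
proof -
  let ?S = "complex_of_real (sB b)"
  have d: "1 + cinner p b \<noteq> 0" using denominator_nonzero[OF b] p by simp
  have dbeta: "dalphaB b p w / (1 + ?S) * (1 + ?S) = dalphaB b p w"
    "cnj (dalphaB b p v / (1 + ?S)) * (1 + ?S) = cnj (dalphaB b p v)"
    using one_plus_sB_nonzero[OF b] by simp_all
  show ?thesis
    unfolding DPhiB_def cinner_add_left cinner_add_right cinner_scale_left cinner_scale_right
      cinner_self_sB[OF b] of_real_WB[OF b] complex_cnj_mult complex_cnj_cnj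
    using cnj_alphaB_relation[OF d] cnj_dalphaB_relation[OF d, of v] dbeta cinner_self_eq_1[OF p]
      alphaB_relation[OF d] dalphaB_relation[OF d, of w] one_plus_sB_nonzero[OF b]
    by algebra
qed

lemma pullback_dr_PhiB:
  assumes "norm b < 1" "norm p = 1"
  shows "pullback1 (PhiB b) (DPhiB b p) dr p v = WB b p * dr p v"
  by (simp add: pullback1_def dr_sphere norm_PhiB_eq_1 cinner_DPhiB_PhiB assms)

lemma pullback_theta_PhiB:
  assumes "norm b < 1" "norm p = 1"
  shows "pullback1 (PhiB b) (DPhiB b p) theta p v = WB b p * theta p v"
  by (simp add: pullback1_def theta_sphere norm_PhiB_eq_1 cinner_DPhiB_PhiB assms)

lemma pullback_d1_theta_PhiB:
  assumes b: "norm b < 1" and p: "norm p = 1"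
  shows "pullback2 (PhiB b) (DPhiB b p) (d1 theta) p v w =
      WB b p * d1 theta p v w
    + 2 * (WB b p - (WB b p)\<^sup>2) * rad p * wedge dr theta p v w
    + wedge (dfun (WB b)) theta p v w
    + wedge dr (compJ (dfun (WB b))) p v w"
proof -
  let ?W = "WB b p"
  define \<delta> where "\<delta> x = dalphaB b p x * cnj (alphaB b p)" for x
  have d: "1 + cinner p b \<noteq> 0" using denominator_nonzero[OF b] p by simp
  have "wedge dr theta (PhiB b p) (DPhiB b p v) (DPhiB b p w) = ?W\<^sup>2 * wedge dr theta p v w"
    using pullback_dr_PhiB[OF b p] pullback_theta_PhiB[OF b p]
    by (simp add: pullback1_def wedge_def power2_eq_square algebra_simps)
  then have "pullback2 (PhiB b) (DPhiB b p) (d1 theta) p v w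
      = 2 * Im (cinner (DPhiB b p w) (DPhiB b p v)) - 2 * ?W\<^sup>2 * wedge dr theta p v w"
    by (simp add: pullback2_def d1_theta_sphere[OF norm_PhiB_eq_1[OF b p]])
  also have "Im (cinner (DPhiB b p w) (DPhiB b p v)) = ?W * Im (cinner w v)
      + Re (\<delta> v) * theta p w - Re (\<delta> w) * theta p v + dr p v * Im (\<delta> w) - dr p w * Im (\<delta> v)"
    using cinner_DPhiB_DPhiB[OF b p, of w v]
    by (simp add: \<delta>_def dr_sphere[OF p] theta_sphere[OF p] Re_cinner_swap[of p v] Im_cinner_swap[of p v]
        algebra_simps)
  finally show ?thesis
    using p by (simp add: d1_theta_sphere[OF p] dfun_WB[OF b d] compJ_dfun_WB[OF b d] \<delta>_def rad_def
        wedge_def algebra_simps power2_eq_square)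
qed

theorem proposition2p1:
  fixes b :: "complex ^ 'n"
  assumes "norm b < 1"
  shows "\<exists>\<Phi>. (\<forall>z\<in>ball 0 1. \<Phi> z = PhiB b z)
     \<and> diffeo_betw (cball 0 1) (cball 0 1) \<Phi>
     \<and> JR_holomorphic_on (cball 0 1) \<Phi>
     \<and> (\<forall>p\<in>sphere 0 1. \<forall>D. (\<Phi> has_derivative D) (at p within cball 0 1) \<longrightarrow>
          (\<forall>v. pullback1 \<Phi> D dr p v = WB b p * dr p v)
        \<and> (\<forall>v. pullback1 \<Phi> D theta p v = WB b p * theta p v)
        \<and> (\<forall>v w. pullback2 \<Phi> D (d1 theta) p v w =
              WB b p * d1 theta p v w
            + 2 * (WB b p - (WB b p)\<^sup>2) * rad p * wedge dr theta p v w
            + wedge (dfun (WB b)) theta p v w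
            + wedge dr (compJ (dfun (WB b))) p v w))"
proof (intro exI[of _ "PhiB b"] conjI ballI allI impI)
  show "diffeo_betw (cball 0 1) (cball 0 1) (PhiB b)" by (rule diffeo_betw_PhiB[OF assms])
  show "JR_holomorphic_on (cball 0 1) (PhiB b)" by (rule JR_holomorphic_on_PhiB[OF assms])
  fix p D assume "p \<in> sphere 0 1" and D: "(PhiB b has_derivative D) (at p within cball 0 1)"
  then have p: "norm p = 1" by simp
  have "(PhiB b has_derivative DPhiB b p) (at p within cball 0 1)"
    using PhiB_has_derivative[OF assms denominator_nonzero[OF assms]] p by simp
  then have "D = DPhiB b p"
    using has_derivative_within_convex_unique[OF D] p by (simp add: interior_cball)
  then show "pullback1 (PhiB b) D dr p v = WB b p * dr p v"
    and "pullback1 (PhiB b) D theta p v = WB b p * theta p v"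
    and "pullback2 (PhiB b) D (d1 theta) p v w =
              WB b p * d1 theta p v w
            + 2 * (WB b p - (WB b p)\<^sup>2) * rad p * wedge dr theta p v w
            + wedge (dfun (WB b)) theta p v w
            + wedge dr (compJ (dfun (WB b))) p v w" for v w
    using pullback_dr_PhiB pullback_theta_PhiB pullback_d1_theta_PhiB assms p by simp_all
qed simp

end
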